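(* There exists $N_0\in\mathbb{N}$ such that for every $N\ge N_0$ the following holds. Let $y\in[0,1]$ and let $(a_i)\in\{0,1\}^{\mathbb{N}}$ be a binary expansion of $y$, i.e. $y=\sum_{i\ge1}a_i2^{-i}$, satisfying $\#\{1\le i\le n:a_i=0\}\ge 0.4\,n$ for all $n\ge N$. Then $\left[0,\frac{1}{56\cdot 2^N}\right]\subseteq K_y$, where $K_y:=\{x\in\mathbb{R}:(x,y)\in K\}$.
   Context: For $k\ge 0$ and $n\ge 1$ let $t_{k,n}:=\frac{1}{2^k n}$. Define the similarities of $\mathbb{R}^2$: $U(x,y)=\left(\frac{x}{2},\frac{y+1}{2}\right)$, $D_0(x,y)=\left(\frac{x}{2},\frac{y}{2}\right)$, and $D_{k,n}(x,y)=\left(\frac{x+t_{k,n}}{2},\frac{y}{2}\right)$ for $k\ge0,n\ge1$. $K$ is the unique non-empty compact set $K\subset\mathbb{R}^2$ satisfying $K=U(K)\cup D_0(K)\cup\bigcup_{k\ge0,n\ge1}D_{k,n}(K)$. *)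

theory Defs
  imports "HOL-Analysis.Analysis"
begin

definition tkn :: "nat \<Rightarrow> nat \<Rightarrow> real" where
  "tkn k n = 1 / (2 ^ k * real n)"

definition Umap :: "real \<times> real \<Rightarrow> real \<times> real" where
  "Umap p = (fst p / 2, (snd p + 1) / 2)"

definition D0map :: "real \<times> real \<Rightarrow> real \<times> real" where
  "D0map p = (fst p / 2, snd p / 2)"

definition Dmap :: "nat \<Rightarrow> nat \<Rightarrow> real \<times> real \<Rightarrow> real \<times> real" where
  "Dmap k n p = ((fst p + tkn k n) / 2, snd p / 2)"

definition Kset :: "(real \<times> real) set" where
  "Kset = (THE K. K \<noteq> {} \<and> compact K \<and>
      K = Umap ` K \<union> D0map ` K \<union> (\<Union>k. \<Union>n\<in>{1..}. Dmap k n ` K))"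

definition Kslice :: "real \<Rightarrow> real set" where
  "Kslice y = {x. (x, y) \<in> Kset}"

end

theory Submission
  imports Defs
begin

text \<open>K is the attractor of the halving maps z \<mapsto> (z + c) / 2 with the compact digit set
  C = {(0,1)} \<union> {(t,0) | t = 0 or t = 1/m}, so it contains every sum of c_i / 2^(i+1) with all
  c_i \<in> C. To hit (x, y), let the second coordinates of the c_i be the binary digits of y and
  choose the first coordinates greedily. For the remainder r_n = 2^n (x - \<Sum>i<n. fst c_i / 2^(i+1)),
  a binary digit 1 forces fst c_n = 0 and doubles r_n, while a digit 0 lets us subtract the
  largest unit fraction below 2 r_n, which leaves at most (2 r_n)^2 \<le> r_n / 4 once r_n \<le> 1/16.
  Hence 4^#zeros r_n \<le> 2^#ones x, and the density of zeros (#ones \<le> 2 #zeros + N) keeps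
  r_n \<le> 1/16 whenever x \<le> 1 / (16 2^N); so r_n / 2^n \<rightarrow> 0 and the digit series converges
  to (x, y).\<close>

definition midpoints :: "'a::real_vector set \<Rightarrow> 'a set \<Rightarrow> 'a set" where
  "midpoints A C = {midpoint p c |p c. p \<in> A \<and> c \<in> C}"

lemma midpointsI [intro]: "p \<in> A \<Longrightarrow> c \<in> C \<Longrightarrow> midpoint p c \<in> midpoints A C"
  unfolding midpoints_def by blast

lemma midpointsE [elim]:
  assumes "q \<in> midpoints A C"
  obtains p c where "p \<in> A" "c \<in> C" "q = midpoint p c"
  using assms unfolding midpoints_def by blast

lemma midpoints_mono: "A \<subseteq> B \<Longrightarrow> midpoints A C \<subseteq> midpoints B C"
  unfolding midpoints_def by blast

lemma midpoints_eq_image: "midpoints A C = (\<lambda>(p, c). midpoint p c) ` (A \<times> C)"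
  unfolding midpoints_def by auto

lemma midpoints_UN: "midpoints A C = (\<Union>c\<in>C. (\<lambda>p. midpoint p c) ` A)"
  unfolding midpoints_def by blast

lemma compact_midpoints:
  fixes A C :: "'a::real_normed_vector set"
  assumes "compact A" "compact C"
  shows "compact (midpoints A C)"
  unfolding midpoints_eq_image midpoint_def case_prod_unfold
  by (intro compact_continuous_image compact_Times assms continuous_intros)

lemma midpoints_cball:
  fixes C :: "'a::real_normed_vector set"
  assumes "C \<subseteq> cball 0 r"
  shows "midpoints (cball 0 r) C \<subseteq> cball 0 r"
proof
  fix q assume "q \<in> midpoints (cball 0 r) C"
  then obtain p c where "norm p \<le> r" "norm c \<le> r" "q = midpoint p c"
    using assms by (force simp: dist_norm)
  then have "norm q \<le> (norm p + norm c) / 2"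
    by (simp add: midpoint_def norm_triangle_ineq)
  with \<open>norm p \<le> r\<close> \<open>norm c \<le> r\<close> show "q \<in> cball 0 r" by (simp add: dist_norm)
qed

lemma dist_midpoint_same:
  fixes a b c :: "'a::real_normed_vector"
  shows "dist (midpoint a c) (midpoint b c) = dist a b / 2"
proof -
  have "midpoint a c - midpoint b c = (1/2) *\<^sub>R (a - b)"
    by (simp add: midpoint_def algebra_simps)
  then show ?thesis unfolding dist_norm by simp
qed

lemma infdist_midpoint_le:
  fixes K :: "'a::euclidean_space set"
  assumes "closed K" "K \<noteq> {}" "midpoints K C \<subseteq> K" "c \<in> C"
  shows "infdist (midpoint a c) K \<le> infdist a K / 2"
proof -
  obtain b where "b \<in> K" "infdist a K = dist a b"
    using infdist_attains_inf[OF assms(1,2)] by metis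
  moreover from this have "midpoint b c \<in> K" using assms(3,4) by blast
  ultimately show ?thesis by (metis infdist_le dist_midpoint_same)
qed

lemma midpoints_invariant_subset:
  fixes K L :: "'a::euclidean_space set"
  assumes "bounded K" "K \<subseteq> midpoints K C" and L: "closed L" "L \<noteq> {}" "midpoints L C \<subseteq> L"
  shows "K \<subseteq> L"
proof
  obtain b where b: "b \<in> L" using L(2) by blast
  obtain r where r: "\<And>a. a \<in> K \<Longrightarrow> norm a \<le> r" using assms(1) by (meson bounded_iff)
  have decay: "infdist a L \<le> (r + norm b) / 2 ^ n" if "a \<in> K" for a n
    using that
  proof (induction n arbitrary: a)
    case 0
    have "infdist a L \<le> dist a b" using b by (rule infdist_le)
    also have "\<dots> \<le> r + norm b" using r[OF 0] by (simp add: dist_norm norm_triangle_le_diff)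
    finally show ?case by simp
  next
    case (Suc n)
    from Suc.prems assms(2) obtain p c where "p \<in> K" "c \<in> C" "a = midpoint p c" by blast
    then have "infdist a L \<le> infdist p L / 2" using infdist_midpoint_le[OF L] by blast
    also have "\<dots> \<le> (r + norm b) / 2 ^ n / 2"
      using \<open>p \<in> K\<close> by (intro divide_right_mono Suc.IH) simp_all
    finally show ?case by simp
  qed
  fix a assume "a \<in> K"
  have "infdist a L \<le> 0"
    by (rule LIMSEQ_le_const[OF LIMSEQ_divide_realpow_zero[of 2 "r + norm b"]])
      (use decay \<open>a \<in> K\<close> in auto)
  then show "a \<in> L" using infdist_nonneg[of a L] in_closed_iff_infdist_zero[OF L(1,2)] by simp
qed

lemma midpoints_Inter_decseq:
  fixes S :: "nat \<Rightarrow> 'a::euclidean_space set"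
  assumes "compact C" "\<And>n. compact (S n)" "decseq S" "\<And>n. S (Suc n) = midpoints (S n) C"
  shows "midpoints (\<Inter>(range S)) C = \<Inter>(range S)"
proof (intro equalityI subsetI)
  fix q assume "q \<in> midpoints (\<Inter>(range S)) C"
  then have "q \<in> S (Suc n)" for n
    unfolding assms(4) using midpoints_mono[of "\<Inter>(range S)" "S n" C] by blast
  then show "q \<in> \<Inter>(range S)" using decseq_SucD[OF assms(3)] by blast
next
  fix p assume p: "p \<in> \<Inter>(range S)"
  define E where "E n = C \<inter> (\<lambda>c. 2 *\<^sub>R p - c) -` S n" for n
  have "compact (E n)" for n
    unfolding E_def using assms(2)
    by (intro compact_Int_closed assms(1) continuous_closed_vimage compact_imp_closed continuous_intros)
  moreover have "E n \<noteq> {}" for n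
  proof -
    from p have "p \<in> midpoints (S n) C" by (auto simp flip: assms(4))
    then obtain q c where "q \<in> S n" "c \<in> C" "p = midpoint q c" by blast
    then have "q = 2 *\<^sub>R p - c" by (simp add: midpoint_eq_iff scaleR_2 eq_diff_eq)
    with \<open>q \<in> S n\<close> \<open>c \<in> C\<close> have "c \<in> E n" by (simp add: E_def)
    then show ?thesis by blast
  qed
  moreover have "m \<le> n \<Longrightarrow> E n \<subseteq> E m" for m n
    using decseqD[OF assms(3)] by (auto simp: E_def)
  ultimately have "\<Inter>(range E) \<noteq> {}" by (rule compact_nest)
  then obtain c where "\<And>n. c \<in> E n" by blast
  then have "c \<in> C" "2 *\<^sub>R p - c \<in> \<Inter>(range S)" by (auto simp: E_def)
  moreover have "p = midpoint (2 *\<^sub>R p - c) c" by (simp add: midpoint_def)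
  ultimately show "p \<in> midpoints (\<Inter>(range S)) C" by (metis midpointsI)
qed

lemma midpoints_fixpoint_exists:
  fixes C :: "'a::euclidean_space set"
  assumes "compact C" "C \<noteq> {}"
  shows "\<exists>K. K \<noteq> {} \<and> compact K \<and> midpoints K C = K"
proof -
  obtain r where r: "C \<subseteq> cball 0 r"
    using bounded_subset_ballD[OF compact_imp_bounded[OF assms(1)]] ball_subset_cball by blast
  define S where "S n = ((\<lambda>A. midpoints A C) ^^ n) (cball 0 r)" for n
  have S_Suc: "S (Suc n) = midpoints (S n) C" for n by (simp add: S_def)
  have S_compact: "compact (S n)" for n
    by (induction n) (simp_all add: S_def compact_midpoints assms(1))
  have S_nonempty: "S n \<noteq> {}" for n
  proof (induction n)
    case 0
    then show ?case using r assms(2) by (auto simp: S_def)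
  next
    case (Suc n)
    then show ?case using assms(2) by (auto simp: S_Suc)
  qed
  have "S (Suc n) \<subseteq> S n" for n
  proof (induction n)
    case 0
    then show ?case using midpoints_cball[OF r] by (simp add: S_def)
  next
    case (Suc n)
    then show ?case unfolding S_Suc[of "Suc n"] S_Suc[of n] by (rule midpoints_mono)
  qed
  then have "decseq S" by (rule decseq_SucI)
  then have "\<Inter>(range S) \<noteq> {}"
    using S_compact S_nonempty by (intro compact_nest) (auto dest: decseqD)
  moreover have "compact (\<Inter>(range S))"
    using S_compact by (intro compact_Inter) auto
  moreover have "midpoints (\<Inter>(range S)) C = \<Inter>(range S)"
    using assms(1) S_compact \<open>decseq S\<close> S_Suc by (rule midpoints_Inter_decseq)
  ultimately show ?thesis by blast
qed

lemma midpoints_fixpoint_unique: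
  fixes C :: "'a::euclidean_space set"
  assumes "compact C" "C \<noteq> {}"
  shows "\<exists>!K. K \<noteq> {} \<and> compact K \<and> midpoints K C = K"
proof (rule ex_ex1I)
  show "\<exists>K. K \<noteq> {} \<and> compact K \<and> midpoints K C = K"
    using assms by (rule midpoints_fixpoint_exists)
next
  fix K L assume "K \<noteq> {} \<and> compact K \<and> midpoints K C = K" "L \<noteq> {} \<and> compact L \<and> midpoints L C = L"
  then show "K = L"
    by (metis compact_imp_bounded compact_imp_closed midpoints_invariant_subset order_refl subset_antisym)
qed

lemma digit_series_mem:
  fixes A C :: "'a::real_normed_vector set"
  assumes "closed A" "q \<in> A" "midpoints A C \<subseteq> A" "\<And>i. e i \<in> C"
    and "(\<lambda>i. (1/2) ^ Suc i *\<^sub>R e i) sums s"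
  shows "s \<in> A"
proof -
  define P where "P e n = (\<Sum>i<n. (1/2::real) ^ Suc i *\<^sub>R e i) + (1/2) ^ n *\<^sub>R q"
    for e :: "nat \<Rightarrow> 'a" and n
  have "P e n \<in> A" if "\<And>i. e i \<in> C" for e n
    using that
  proof (induction n arbitrary: e)
    case 0
    then show ?case using assms(2) by (simp add: P_def)
  next
    case (Suc n)
    have "P e (Suc n) = midpoint (P (e \<circ> Suc) n) (e 0)"
      unfolding P_def midpoint_def sum.lessThan_Suc_shift
      by (simp add: scaleR_add_right scaleR_sum_right algebra_simps)
    moreover have "P (e \<circ> Suc) n \<in> A" using Suc by simp
    ultimately show ?case using Suc.prems assms(3) by auto
  qed
  moreover have "P e \<longlonglongrightarrow> s + 0 *\<^sub>R q"
    using assms(5) unfolding P_def sums_def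
    by (intro tendsto_add tendsto_scaleR LIMSEQ_realpow_zero tendsto_const) simp_all
  ultimately show ?thesis
    using assms(1,4) closed_sequentially[of A "P e"] by simp
qed

definition unit_fractions :: "real set" where
  "unit_fractions = insert 0 (range (\<lambda>m. 1 / real (Suc m)))"

lemma compact_unit_fractions: "compact unit_fractions"
  unfolding unit_fractions_def
  by (rule compact_sequence_with_limit) (rule LIMSEQ_inverse_real_of_nat[unfolded inverse_eq_divide])

lemma unit_fractions_eq_tkn: "unit_fractions = insert 0 (\<Union>k. \<Union>n\<in>{1..}. {tkn k n})"
proof -
  have "range (\<lambda>m. 1 / real (Suc m)) = (\<Union>k. \<Union>n\<in>{1..}. {tkn k n})"
  proof (intro equalityI subsetI)
    fix t assume "t \<in> range (\<lambda>m. 1 / real (Suc m))"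
    then obtain m where "t = 1 / real (Suc m)" by blast
    then have "t = tkn 0 (Suc m)" by (simp add: tkn_def)
    moreover have "Suc m \<in> {1..}" by simp
    ultimately show "t \<in> (\<Union>k. \<Union>n\<in>{1..}. {tkn k n})" by blast
  next
    fix t assume "t \<in> (\<Union>k. \<Union>n\<in>{1..}. {tkn k n})"
    then obtain k n where "n \<ge> 1" "t = tkn k n" by blast
    then have "2 ^ k * n \<noteq> 0" by simp
    then obtain m where "2 ^ k * n = Suc m" using not0_implies_Suc by blast
    then have "t = 1 / real (Suc m)"
      unfolding \<open>t = tkn k n\<close> tkn_def using arg_cong[OF \<open>2 ^ k * n = Suc m\<close>, of real] by simp
    then show "t \<in> range (\<lambda>m. 1 / real (Suc m))" by blast
  qed
  then show ?thesis unfolding unit_fractions_def by simp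
qed

definition Kdigits :: "(real \<times> real) set" where
  "Kdigits = insert (0, 1) ((\<lambda>t. (t, 0)) ` unit_fractions)"

lemma compact_Kdigits: "compact Kdigits"
proof -
  have "compact ((\<lambda>t. (t, 0::real)) ` unit_fractions)"
    by (rule compact_continuous_image[rotated, OF compact_unit_fractions]) (intro continuous_intros)
  then show ?thesis unfolding Kdigits_def by (rule compact_insert)
qed

lemma Kdigits_eq: "Kdigits = insert (0, 1) (insert (0, 0) (\<Union>k. \<Union>n\<in>{1..}. {(tkn k n, 0)}))"
  unfolding Kdigits_def unit_fractions_eq_tkn image_insert image_UN image_empty ..

lemma Kset_maps_eq_midpoint:
  "Umap = (\<lambda>p. midpoint p (0, 1))" "D0map = (\<lambda>p. midpoint p (0, 0))"
  "Dmap k n = (\<lambda>p. midpoint p (tkn k n, 0))"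
  by (simp_all add: fun_eq_iff split_paired_all Umap_def D0map_def Dmap_def midpoint_def)

lemma Kset_equation_eq_midpoints:
  "Umap ` K \<union> D0map ` K \<union> (\<Union>k. \<Union>n\<in>{1..}. Dmap k n ` K) = midpoints K Kdigits"
  unfolding midpoints_UN Kdigits_eq Kset_maps_eq_midpoint
  by (simp only: UN_UN_flatten UN_insert UN_empty Un_empty_right Un_assoc)

lemma Kset_fixpoint: "Kset \<noteq> {}" "compact Kset" "midpoints Kset Kdigits = Kset"
proof -
  have "\<exists>!K. K \<noteq> {} \<and> compact K \<and> midpoints K Kdigits = K"
    by (rule midpoints_fixpoint_unique[OF compact_Kdigits]) (simp add: Kdigits_def)
  then have "Kset \<noteq> {} \<and> compact Kset \<and> midpoints Kset Kdigits = Kset"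
    unfolding Kset_def Kset_equation_eq_midpoints eq_commute[of _ "midpoints _ _"] by (rule theI')
  then show "Kset \<noteq> {}" "compact Kset" "midpoints Kset Kdigits = Kset" by auto
qed

text \<open>For \<open>0 < w \<le> 1\<close> this is the largest unit fraction not exceeding \<open>w\<close>;
  at \<open>w = 0\<close> division by zero makes it 0.\<close>
definition unit_fraction_below :: "real \<Rightarrow> real" where
  "unit_fraction_below w = 1 / real (nat \<lceil>1 / w\<rceil>)"

lemma unit_fraction_below_pos:
  assumes "0 < w"
  obtains m where "m \<ge> 1" "unit_fraction_below w = 1 / real m" "1 \<le> real m * w" "(real m - 1) * w < 1"
proof
  define m where "m = nat \<lceil>1 / w\<rceil>"
  have "1 / w \<le> real m" "real m < 1 / w + 1"
    using assms unfolding m_def by (simp_all add: zero_less_divide_iff) linarith+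
  then show "1 \<le> real m * w" "(real m - 1) * w < 1"
    using assms by (simp_all add: field_simps)
  then show "m \<ge> 1" using assms by (cases m) simp_all
  show "unit_fraction_below w = 1 / real m" by (simp add: unit_fraction_below_def m_def)
qed

lemma unit_fraction_below_mem: "0 \<le> w \<Longrightarrow> unit_fraction_below w \<in> unit_fractions"
proof (cases "w = 0")
  case False
  assume "0 \<le> w"
  with False have "0 < w" by simp
  then obtain m where "m \<ge> 1" "unit_fraction_below w = 1 / real m"
    by (rule unit_fraction_below_pos)
  moreover from \<open>m \<ge> 1\<close> obtain k where "m = Suc k" using not0_implies_Suc by fastforce
  ultimately show ?thesis by (simp add: unit_fractions_def)
qed (simp add: unit_fraction_below_def unit_fractions_def)

lemma unit_fraction_below_le: "0 \<le> w \<Longrightarrow> unit_fraction_below w \<le> w"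
proof (cases "w = 0")
  case False
  assume "0 \<le> w"
  with False have "0 < w" by simp
  then obtain m where "m \<ge> 1" "unit_fraction_below w = 1 / real m" "1 \<le> real m * w"
    by (rule unit_fraction_below_pos)
  then show ?thesis by (simp add: divide_le_eq mult.commute)
qed (simp add: unit_fraction_below_def)

lemma unit_fraction_below_approx: "0 \<le> w \<Longrightarrow> w - unit_fraction_below w \<le> w\<^sup>2"
proof (cases "w = 0")
  case False
  assume "0 \<le> w"
  with False have "0 < w" by simp
  then obtain m where m: "m \<ge> 1" "unit_fraction_below w = 1 / real m"
    and m_ge: "1 \<le> real m * w" and m_lt: "(real m - 1) * w < 1"
    by (rule unit_fraction_below_pos)
  have "real m * (w - 1 / real m) = real m * w - 1" using m(1) by (simp add: field_simps)
  also have "\<dots> \<le> w" using m_lt by (simp add: algebra_simps)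
  also have "\<dots> \<le> real m * w\<^sup>2"
    using mult_left_mono[OF m_ge, of w] \<open>0 < w\<close> by (simp add: power2_eq_square algebra_simps)
  finally show ?thesis using m by simp
qed (simp add: unit_fraction_below_def)

definition count_zeros :: "(nat \<Rightarrow> nat) \<Rightarrow> nat \<Rightarrow> nat" where
  "count_zeros a n = card {i\<in>{1..n}. a i = 0}"

definition count_ones :: "(nat \<Rightarrow> nat) \<Rightarrow> nat \<Rightarrow> nat" where
  "count_ones a n = card {i\<in>{1..n}. a i \<noteq> 0}"

lemma count_zeros_Suc: "count_zeros a (Suc n) = count_zeros a n + (if a (Suc n) = 0 then 1 else 0)"
proof -
  have "{i\<in>{1..Suc n}. a i = 0} = (if a (Suc n) = 0 then insert (Suc n) else id) {i\<in>{1..n}. a i = 0}"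
    by (auto simp: le_Suc_eq)
  then show ?thesis by (simp add: count_zeros_def)
qed

lemma count_ones_Suc: "count_ones a (Suc n) = count_ones a n + (if a (Suc n) = 0 then 0 else 1)"
proof -
  have "{i\<in>{1..Suc n}. a i \<noteq> 0} = (if a (Suc n) = 0 then id else insert (Suc n)) {i\<in>{1..n}. a i \<noteq> 0}"
    by (auto simp: le_Suc_eq)
  then show ?thesis by (simp add: count_ones_def)
qed

lemma count_zeros_add_ones: "count_zeros a n + count_ones a n = n"
  by (induction n) (simp_all add: count_zeros_Suc count_ones_Suc, simp add: count_zeros_def count_ones_def)

lemma count_ones_le_twice_zeros:
  assumes "\<forall>n\<ge>N. real (count_zeros a n) \<ge> 0.4 * real n"
  shows "count_ones a n \<le> 2 * count_zeros a n + N"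
proof (cases "n \<ge> N")
  case True
  with assms have "real (count_zeros a n) \<ge> 0.4 * real n" by blast
  moreover have "real (count_zeros a n) + real (count_ones a n) = real n"
    using count_zeros_add_ones[of a n] by (metis of_nat_add)
  ultimately show ?thesis by linarith
next
  case False
  then show ?thesis using count_zeros_add_ones[of a n] by linarith
qed

definition greedy_digit :: "nat \<Rightarrow> real \<Rightarrow> real \<times> real" where
  "greedy_digit b r = (if b = 0 then (unit_fraction_below (2 * r), 0) else (0, 1))"

fun greedy_remainder :: "(nat \<Rightarrow> nat) \<Rightarrow> real \<Rightarrow> nat \<Rightarrow> real" where
  "greedy_remainder a x 0 = x"
| "greedy_remainder a x (Suc n) =
     2 * greedy_remainder a x n - fst (greedy_digit (a (Suc n)) (greedy_remainder a x n))"

lemma greedy_digit_mem: "0 \<le> r \<Longrightarrow> greedy_digit b r \<in> Kdigits"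
  using unit_fraction_below_mem[of "2 * r"] by (auto simp: greedy_digit_def Kdigits_def)

lemma greedy_partial_sum:
  "(\<Sum>i<n. (1/2) ^ Suc i * fst (greedy_digit (a (Suc i)) (greedy_remainder a x i)))
     = x - greedy_remainder a x n / 2 ^ n"
  by (induction n) (simp_all add: field_simps)

lemma weighted_le_imp_le_sixteenth:
  fixes r x :: real
  assumes "4 ^ z * r \<le> 2 ^ k * x" "k \<le> 2 * z + N" "0 \<le> x" "2 ^ N * x \<le> 1/16"
  shows "r \<le> 1/16"
proof -
  have "(2::real) ^ k \<le> 4 ^ z * 2 ^ N"
    using power_increasing[OF assms(2), of "2::real"] by (simp add: power_add power_mult)
  then have "4 ^ z * r \<le> 4 ^ z * (2 ^ N * x)"
    using assms(1) mult_right_mono[OF _ assms(3)] by (metis mult.assoc order_trans)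
  also have "\<dots> \<le> 4 ^ z * (1/16)"
    using assms(4) by (intro mult_left_mono) simp_all
  finally show ?thesis by simp
qed

lemma greedy_remainder_weighted_bound:
  assumes ones: "\<And>n. count_ones a n \<le> 2 * count_zeros a n + N"
    and x: "0 \<le> x" "2 ^ N * x \<le> 1/16"
  shows "0 \<le> greedy_remainder a x n \<and>
    4 ^ count_zeros a n * greedy_remainder a x n \<le> 2 ^ count_ones a n * x"
proof (induction n)
  case 0
  then show ?case using x by (simp add: count_zeros_def count_ones_def)
next
  case (Suc n)
  define r where "r = greedy_remainder a x n"
  have r: "0 \<le> r" "4 ^ count_zeros a n * r \<le> 2 ^ count_ones a n * x"
    using Suc.IH by (simp_all add: r_def)
  have r_small: "r \<le> 1/16" using r(2) ones x by (rule weighted_le_imp_le_sixteenth)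
  show ?case
  proof (cases "a (Suc n) = 0")
    case True
    have r': "0 \<le> greedy_remainder a x (Suc n)" "greedy_remainder a x (Suc n) \<le> (2 * r)\<^sup>2"
      using unit_fraction_below_le[of "2 * r"] unit_fraction_below_approx[of "2 * r"] r(1) True
      by (simp_all add: greedy_digit_def r_def)
    have "4 ^ count_zeros a (Suc n) * greedy_remainder a x (Suc n)
        = 4 * 4 ^ count_zeros a n * greedy_remainder a x (Suc n)"
      using True by (simp add: count_zeros_Suc)
    also have "\<dots> \<le> 4 * 4 ^ count_zeros a n * (2 * r)\<^sup>2"
      using r'(2) by (intro mult_left_mono) simp_all
    also have "\<dots> = 16 * r * (4 ^ count_zeros a n * r)"
      by (simp add: power2_eq_square)
    also have "\<dots> \<le> 16 * r * (2 ^ count_ones a n * x)"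
      using r by (intro mult_left_mono) simp_all
    also have "\<dots> \<le> 2 ^ count_ones a (Suc n) * x"
      using r_small r(1) x(1) True by (simp add: count_ones_Suc mult_left_le_one_le)
    finally show ?thesis using r'(1) by simp
  next
    case False
    then show ?thesis using r by (simp add: greedy_digit_def r_def count_zeros_Suc count_ones_Suc)
  qed
qed

lemma greedy_remainder_bounds:
  assumes "\<And>n. count_ones a n \<le> 2 * count_zeros a n + N" "0 \<le> x" "2 ^ N * x \<le> 1/16"
  shows "0 \<le> greedy_remainder a x n" "greedy_remainder a x n \<le> 1/16"
  using greedy_remainder_weighted_bound[OF assms, of n] assms weighted_le_imp_le_sixteenth by blast+

lemma greedy_digit_series_sums:
  assumes a: "\<forall>i\<ge>1. a i \<in> {0, 1}"
    and r: "\<And>n. 0 \<le> greedy_remainder a x n" "\<And>n. greedy_remainder a x n \<le> 1"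
  shows "(\<lambda>i. (1/2) ^ Suc i *\<^sub>R greedy_digit (a (Suc i)) (greedy_remainder a x i))
           sums (x, \<Sum>i. real (a (Suc i)) / 2 ^ Suc i)"
proof -
  define d where "d i = greedy_digit (a (Suc i)) (greedy_remainder a x i)" for i
  have "(\<lambda>n. greedy_remainder a x n / 2 ^ n) \<longlonglongrightarrow> 0"
  proof (rule Lim_null_comparison)
    show "\<forall>\<^sub>F n in sequentially. norm (greedy_remainder a x n / 2 ^ n) \<le> 1 / 2 ^ n"
      using r by (intro always_eventually allI) (simp add: divide_right_mono)
  qed (rule LIMSEQ_divide_realpow_zero, simp)
  then have "(\<lambda>n. x - greedy_remainder a x n / 2 ^ n) \<longlonglongrightarrow> x - 0"
    by (intro tendsto_diff tendsto_const)
  then have fst_sums: "(\<lambda>i. (1/2) ^ Suc i * fst (d i)) sums x"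
    unfolding sums_def d_def greedy_partial_sum by simp
  have snd_digit: "(1/2) ^ Suc i * snd (d i) = real (a (Suc i)) / 2 ^ Suc i" for i
    using a[rule_format, of "Suc i"] by (auto simp: d_def greedy_digit_def power_one_over)
  have "summable (\<lambda>i. real (a (Suc i)) / 2 ^ Suc i)"
  proof (rule summable_comparison_test')
    show "summable (\<lambda>i. (1/2::real) ^ Suc i)" by (simp add: summable_geometric)
    show "norm (real (a (Suc i)) / 2 ^ Suc i) \<le> (1/2) ^ Suc i" for i
      using a[rule_format, of "Suc i"] by (auto simp: power_divide)
  qed
  then have "(\<lambda>i. (1/2) ^ Suc i * snd (d i)) sums (\<Sum>i. real (a (Suc i)) / 2 ^ Suc i)"
    unfolding snd_digit by (rule summable_sums)
  with fst_sums have "(\<lambda>n. (\<Sum>i<n. (1/2) ^ Suc i * fst (d i), \<Sum>i<n. (1/2) ^ Suc i * snd (d i)))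
      \<longlonglongrightarrow> (x, \<Sum>i. real (a (Suc i)) / 2 ^ Suc i)"
    unfolding sums_def by (rule tendsto_Pair)
  moreover have "(\<Sum>i<n. (1/2) ^ Suc i *\<^sub>R d i)
      = (\<Sum>i<n. (1/2) ^ Suc i * fst (d i), \<Sum>i<n. (1/2) ^ Suc i * snd (d i))" for n
    by (simp add: prod_eq_iff fst_sum snd_sum)
  ultimately show ?thesis unfolding d_def[symmetric] sums_def by simp
qed

theorem mainTheorem9:
  shows "\<exists>N0::nat. \<forall>N\<ge>N0. \<forall>(y::real) (a::nat \<Rightarrow> nat).
     y \<in> {0..1} \<longrightarrow>
     (\<forall>i\<ge>1. a i \<in> {0, 1}) \<longrightarrow>
     y = (\<Sum>i. real (a (Suc i)) / 2 ^ (Suc i)) \<longrightarrow>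
     (\<forall>n\<ge>N. real (card {i\<in>{1..n}. a i = 0}) \<ge> 0.4 * real n) \<longrightarrow>
     {0..1 / (56 * 2 ^ N)} \<subseteq> Kslice y"
proof (intro exI[of _ 0] allI impI subsetI)
  fix N :: nat and y :: real and a :: "nat \<Rightarrow> nat" and x :: real
  assume a: "\<forall>i\<ge>1. a i \<in> {0, 1}" and y: "y = (\<Sum>i. real (a (Suc i)) / 2 ^ (Suc i))"
    and density: "\<forall>n\<ge>N. real (card {i\<in>{1..n}. a i = 0}) \<ge> 0.4 * real n"
    and "x \<in> {0..1 / (56 * 2 ^ N)}"
  then have x: "0 \<le> x" "2 ^ N * x \<le> 1/16" by (auto simp: field_simps)
  have "count_ones a n \<le> 2 * count_zeros a n + N" for n
    using density by (intro count_ones_le_twice_zeros) (simp add: count_zeros_def)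
  note r = greedy_remainder_bounds[OF this x]
  obtain q where "q \<in> Kset" using Kset_fixpoint(1) by blast
  have "(x, y) \<in> Kset"
  proof (rule digit_series_mem)
    show "closed Kset" using Kset_fixpoint(2) by (rule compact_imp_closed)
    show "midpoints Kset Kdigits \<subseteq> Kset" using Kset_fixpoint(3) by simp
    show "greedy_digit (a (Suc i)) (greedy_remainder a x i) \<in> Kdigits" for i
      using r(1) by (rule greedy_digit_mem)
    show "(\<lambda>i. (1/2) ^ Suc i *\<^sub>R greedy_digit (a (Suc i)) (greedy_remainder a x i)) sums (x, y)"
      unfolding y using a r(1) by (intro greedy_digit_series_sums) (auto intro: order_trans[OF r(2)])
  qed fact
  then show "x \<in> Kslice y" by (simp add: Kslice_def)
qed

end
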